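(* Let $T=\bigoplus_p\mathbb Z(p)$ (sum over all primes) and $G=\prod_p\mathbb Z(p)$, so $T$ is the torsion subgroup of $G$. Then $G$ and $T$ are strongly co-Hopfian, but $G/T$ is not strongly co-Hopfian.
   Context: All groups are abelian. A group $G$ is strongly co-Hopfian if for every endomorphism $f$ of $G$ there is $n\in\mathbb N$ with $f^n(G)=f^{n+1}(G)$. $\mathbb Z(p)$ denotes the cyclic group of order $p$. *)

theory Defs
  imports "HOL-Algebra.Product_Groups" "HOL-Algebra.Elementary_Groups" "HOL-Computational_Algebra.Primes"
begin

definition strongly_coHopfian :: "('a, 'b) monoid_scheme \<Rightarrow> bool" where
  "strongly_coHopfian G \<longleftrightarrow>
     (\<forall>f \<in> hom G G. \<exists>n::nat. (f ^^ n) ` carrier G = (f ^^ Suc n) ` carrier G)"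

definition primeProd :: "(nat \<Rightarrow> int) monoid" where
  "primeProd = product_group {p. prime p} integer_mod_group"

definition primeSum :: "(nat \<Rightarrow> int) monoid" where
  "primeSum = sum_group {p. prime p} integer_mod_group"

end

theory Submission
  imports Defs "HOL-Number_Theory.Number_Theory" "HOL-Library.Nat_Bijection"
begin

(* In G = prod_p Z(p), and in its ideal T, an element whose p-th coordinate vanishes is
   divisible by p, so every endomorphism f preserves such elements. Hence f acts on the p-th
   coordinate as multiplication by some c_p, and Fermat's little theorem (c^p = c mod p)
   gives f(G) = f(f(G)).

   G/T, on the other hand, is a vector space over Q: a/b acts at the prime p as
   multiplication by a * b^(p-2) mod p, which is meaningful for all but finitely many p.
   Indicator functions of infinitely many disjoint infinite sets of primes are independent,
   so the dimension is infinite, and shifting a countable part of a basis gives an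
   injective, non-surjective endomorphism, whose iterated images strictly decrease. *)

lemma prime_not_dvd_imp_coprime: "prime p \<Longrightarrow> \<not> int p dvd b \<Longrightarrow> coprime b (int p)"
  by (metis coprime_commute prime_imp_coprime prime_nat_int_transfer)

lemma fermat_theorem_int:
  fixes a :: int
  assumes "prime p" and "\<not> int p dvd a"
  shows "[a ^ (p - 1) = 1] (mod int p)"
proof -
  interpret residues_prime p "residue_ring (int p)"
    using assms(1) by unfold_locales
  have "coprime a (int p)"
    using assms by (rule prime_not_dvd_imp_coprime)
  then show ?thesis
    using euler_theorem prime_totient_eq by simp
qed

lemma fermat_little_int:
  fixes a :: int
  assumes "prime p"
  shows "[a ^ p = a] (mod int p)"
proof (cases "int p dvd a")
  case True
  then have "[a ^ p = 0] (mod int p)"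
    using prime_gt_0_nat[OF assms] by (simp add: cong_0_iff dvd_power dvd_trans)
  moreover have "[a = 0] (mod int p)"
    using True by (simp add: cong_0_iff)
  ultimately show ?thesis
    by (meson cong_sym cong_trans)
next
  case False
  have "a ^ p = a ^ (p - 1) * a"
    using prime_gt_0_nat[OF assms] by (metis Suc_diff_1 power_Suc2)
  also have "[\<dots> = 1 * a] (mod int p)"
    by (intro cong_mult cong_refl fermat_theorem_int assms False)
  finally show ?thesis by simp
qed

lemma mult_power_diff_two: "2 \<le> n \<Longrightarrow> a * a ^ (n - 2) = a ^ (n - 1)"
proof -
  assume "2 \<le> n"
  then have "n - 1 = Suc (n - 2)"
    by arith
  then show ?thesis
    by simp
qed

lemma mult_power_pred: "0 < n \<Longrightarrow> a * a ^ (n - 1) = a ^ n"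
  by (cases n) simp_all

lemma mod_add_pred_mult: "0 < p \<Longrightarrow> (a + int (p - 1) * b) mod int p = (a - b) mod int p"
proof -
  assume "0 < p"
  then have "a + int (p - 1) * b = (a - b) + b * int p"
    by (simp add: of_nat_diff algebra_simps)
  then show ?thesis
    by (simp only: mod_mult_self1)
qed

lemma eventually_not_prime_dvd:
  assumes "b \<noteq> 0"
  shows "\<forall>\<^sub>F p in cofinite. \<not> int p dvd b"
proof -
  have "{p. int p dvd b} \<subseteq> {..nat \<bar>b\<bar>}"
    using assms by (auto dest: dvd_imp_le_int)
  then show ?thesis
    unfolding eventually_cofinite by (simp add: finite_subset)
qed

lemma rat_as_fraction:
  fixes r :: rat
  obtains a b :: int where "b \<noteq> 0" and "r = of_int a / of_int b"
proof -
  obtain a b where q: "quotient_of r = (a, b)"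
    by (cases "quotient_of r")
  then show ?thesis
    using that[of b a] quotient_of_div[OF q] quotient_of_denom_pos[OF q] by simp
qed

section \<open>Strongly co-Hopfian groups\<close>

lemma funpow_hom_in_carrier: "f \<in> hom G G \<Longrightarrow> x \<in> carrier G \<Longrightarrow> (f ^^ n) x \<in> carrier G"
  by (induction n) (simp_all add: hom_in_carrier)

lemma strongly_coHopfian_iso:
  assumes "group G" and "G \<cong> H" and "strongly_coHopfian G"
  shows "strongly_coHopfian H"
  unfolding strongly_coHopfian_def
proof
  fix f assume f: "f \<in> hom H H"
  obtain \<phi> where \<phi>: "\<phi> \<in> iso G H"
    using assms(2) unfolding is_iso_def by blast
  define \<psi> where "\<psi> = inv_into (carrier G) \<phi>"
  have \<phi>_onto: "\<phi> ` carrier G = carrier H"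
    using \<phi> by (simp add: iso_def bij_betw_def)
  have \<phi>_\<psi>: "\<phi> (\<psi> y) = y" if "y \<in> carrier H" for y
    using that \<phi>_onto by (simp add: \<psi>_def f_inv_into_f)
  define g where "g = \<psi> \<circ> f \<circ> \<phi>"
  have g: "g \<in> hom G G"
    unfolding g_def \<psi>_def using \<phi> group.iso_set_sym[OF assms(1) \<phi>] f
    by (auto simp: iso_def intro: hom_compose)
  have \<phi>_g: "\<phi> (g y) = f (\<phi> y)" if "y \<in> carrier G" for y
  proof -
    have "f (\<phi> y) \<in> carrier H"
      using that \<phi>_onto hom_in_carrier[OF f] by blast
    then show ?thesis
      by (simp add: g_def \<phi>_\<psi>)
  qed
  have \<phi>_g_pow: "\<phi> ((g ^^ k) x) = (f ^^ k) (\<phi> x)" if "x \<in> carrier G" for k x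
  proof (induction k)
    case (Suc k)
    then show ?case
      using \<phi>_g[OF funpow_hom_in_carrier[OF g that]] by simp
  qed simp
  have img: "(f ^^ k) ` carrier H = \<phi> ` (g ^^ k) ` carrier G" for k
    unfolding \<phi>_onto[symmetric] image_image by (rule image_cong[OF refl \<phi>_g_pow[symmetric]])
  obtain n where "(g ^^ n) ` carrier G = (g ^^ Suc n) ` carrier G"
    using assms(3) g unfolding strongly_coHopfian_def by blast
  then show "\<exists>n. (f ^^ n) ` carrier H = (f ^^ Suc n) ` carrier H"
    by (intro exI[of _ n]) (simp only: img)
qed

lemma not_strongly_coHopfian_if_inj_not_surj:
  assumes f: "f \<in> hom G G" and inj: "inj_on f (carrier G)" and not_onto: "f ` carrier G \<noteq> carrier G"
  shows "\<not> strongly_coHopfian G"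
proof
  assume "strongly_coHopfian G"
  then obtain n where "(f ^^ n) ` carrier G = (f ^^ Suc n) ` carrier G"
    using f unfolding strongly_coHopfian_def by blast
  then have n: "(f ^^ n) ` carrier G = (f ^^ n) ` f ` carrier G"
    by (simp only: funpow_Suc_right image_comp)
  have into: "f ` carrier G \<subseteq> carrier G"
    using f by (auto simp: hom_in_carrier)
  have "inj_on (f ^^ k) (carrier G)" for k
  proof (induction k)
    case (Suc k)
    have "(f ^^ k) ` carrier G \<subseteq> carrier G"
      using funpow_hom_in_carrier[OF f] by blast
    then have "inj_on f ((f ^^ k) ` carrier G)"
      using inj inj_on_subset by blast
    then show ?case
      using Suc comp_inj_on by (simp only: funpow.simps)
  qed simp
  then have "carrier G = f ` carrier G"
    using n by (simp only: inj_on_image_eq_iff[OF _ subset_refl into])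
  then show False
    using not_onto by simp
qed

definition additive_group :: "'a::ab_group_add monoid" where
  "additive_group = \<lparr>carrier = UNIV, monoid.mult = (+), one = 0\<rparr>"

lemma group_additive_group: "group additive_group"
proof (rule groupI)
  show "\<exists>y\<in>carrier additive_group. y \<otimes>\<^bsub>additive_group\<^esub> x = \<one>\<^bsub>additive_group\<^esub>" for x :: 'a
    by (rule bexI[of _ "- x"]) (simp_all add: additive_group_def)
qed (simp_all add: additive_group_def add.assoc)

lemma not_strongly_coHopfian_additive_group:
  fixes f :: "'a::ab_group_add \<Rightarrow> 'a"
  assumes "\<And>x y. f (x + y) = f x + f y" and "inj f" and "\<not> surj f"
  shows "\<not> strongly_coHopfian (additive_group :: 'a monoid)"
  by (rule not_strongly_coHopfian_if_inj_not_surj[of f]) (use assms in \<open>auto simp: additive_group_def hom_def\<close>)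

definition shift_along :: "(nat \<Rightarrow> 'a) \<Rightarrow> 'a \<Rightarrow> 'a" where
  "shift_along v b = (if b \<in> range v then v (Suc (inv_into UNIV v b)) else b)"

lemma shift_along_apply: "inj v \<Longrightarrow> shift_along v (v k) = v (Suc k)"
  by (simp add: shift_along_def inv_into_f_f)

lemma shift_along_outside: "b \<notin> range v \<Longrightarrow> shift_along v b = b"
  by (simp add: shift_along_def)

lemma shift_along_in_range_iff: "inj v \<Longrightarrow> shift_along v b \<in> range v \<longleftrightarrow> b \<in> range v"
  by (cases "b \<in> range v") (auto simp: shift_along_apply shift_along_outside)

lemma inj_shift_along:
  assumes v: "inj v"
  shows "inj (shift_along v)"
proof (rule injI)
  fix b c assume eq: "shift_along v b = shift_along v c"
  then have range_iff: "b \<in> range v \<longleftrightarrow> c \<in> range v"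
    using shift_along_in_range_iff[OF v] by metis
  show "b = c"
  proof (cases "b \<in> range v")
    case True
    then obtain j k where "b = v j" "c = v k"
      using range_iff by blast
    then show ?thesis
      using eq by (simp add: shift_along_apply[OF v] inj_eq[OF v])
  next
    case False
    then show ?thesis
      using eq range_iff by (simp add: shift_along_outside)
  qed
qed

lemma shift_along_image:
  assumes v: "inj v" and "range v \<subseteq> B"
  shows "shift_along v ` B \<subseteq> B - {v 0}"
proof
  fix c assume "c \<in> shift_along v ` B"
  then obtain b where b: "b \<in> B" "c = shift_along v b"
    by blast
  show "c \<in> B - {v 0}"
  proof (cases "b \<in> range v")
    case True
    then show ?thesis
      using b assms by (auto simp: shift_along_apply inj_eq)
  next
    case False
    then show ?thesis
      using b by (auto simp: shift_along_outside)
  qed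
qed

lemma (in vector_space) infinite_independent_imp_inj_not_surj:
  assumes "independent S" and "infinite S"
  obtains f where "Vector_Spaces.linear scale scale f" and "inj f" and "\<not> surj f"
proof -
  interpret pair: vector_space_pair scale scale ..
  obtain v :: "nat \<Rightarrow> 'b" where v: "inj v" "range v \<subseteq> S"
    using infinite_countable_subset[OF assms(2)] by blast
  define B where "B = extend_basis S"
  have B: "independent B" "span B = UNIV" "range v \<subseteq> B"
    unfolding B_def using assms(1) v(2) extend_basis_superset[OF assms(1)]
    by (simp_all add: independent_extend_basis span_extend_basis)
  define g where "g = shift_along v"
  have g_into: "g ` B \<subseteq> B - {v 0}"
    unfolding g_def by (rule shift_along_image[OF v(1) B(3)])
  define f where "f = pair.construct B g"
  have lin: "Vector_Spaces.linear scale scale f"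
    unfolding f_def by (rule pair.linear_construct[OF B(1)])
  have f_B: "f ` B = g ` B"
    unfolding f_def by (rule image_cong[OF refl pair.construct_basis[OF B(1)]])
  have "independent (f ` B)"
    unfolding f_B using g_into by (intro independent_mono[OF B(1)]) blast
  moreover have "inj_on f B"
    using inj_on_subset[OF inj_shift_along[OF v(1)]] pair.construct_basis[OF B(1)]
    by (simp add: inj_on_def f_def g_def)
  ultimately have "inj_on f (span B)"
    using pair.linear_inj_on_span_iff_independent_image[OF lin] by blast
  then have "inj f"
    using B(2) by simp
  moreover have "v 0 \<notin> range f"
  proof
    assume "v 0 \<in> range f"
    then have "v 0 \<in> span (B - {v 0})"
      using span_mono[OF g_into] by (auto simp: f_def pair.range_construct_eq_span[OF B(1)])
    then have "dependent B"
      unfolding dependent_def using B(3) by blast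
    then show False
      using B(1) by simp
  qed
  ultimately show ?thesis
    using that[OF lin] by auto
qed

section \<open>Endomorphisms of ideals of \<open>\<Pi>\<^sub>p Z(p)\<close>\<close>

abbreviation primes :: "nat set" where "primes \<equiv> {p. prime p}"

definition coord_mult :: "(nat \<Rightarrow> int) \<Rightarrow> (nat \<Rightarrow> int) \<Rightarrow> nat \<Rightarrow> int" where
  "coord_mult a x = (\<lambda>p\<in>primes. (a p * x p) mod int p)"

definition unit_vector :: "nat \<Rightarrow> nat \<Rightarrow> int" where
  "unit_vector p = (\<lambda>q\<in>primes. if q = p then 1 else 0)"

lemma carrier_primeProd: "carrier primeProd = (\<Pi>\<^sub>E p\<in>primes. {0..<int p})"
  unfolding primeProd_def carrier_product_group
  by (rule PiE_cong) (auto simp: carrier_integer_mod_group dest: prime_gt_0_nat)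

lemma mult_primeProd: "x \<otimes>\<^bsub>primeProd\<^esub> y = (\<lambda>p\<in>primes. (x p + y p) mod int p)"
  by (simp add: primeProd_def)

lemma group_primeProd: "group primeProd"
  by (simp add: primeProd_def)

lemma nat_pow_primeProd: "x [^]\<^bsub>primeProd\<^esub> (n::nat) = coord_mult (\<lambda>_. int n) x"
proof (induction n)
  case 0
  then show ?case by (simp add: primeProd_def coord_mult_def)
next
  case (Suc n)
  have "x [^]\<^bsub>primeProd\<^esub> Suc n = x [^]\<^bsub>primeProd\<^esub> n \<otimes>\<^bsub>primeProd\<^esub> x"
    by simp
  then show ?case
    by (auto simp: Suc mult_primeProd coord_mult_def mod_add_right_eq algebra_simps intro!: restrict_ext)
qed

lemma coord_mod_primeProd: "x \<in> carrier primeProd \<Longrightarrow> prime p \<Longrightarrow> x p mod int p = x p"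
  by (auto simp: carrier_primeProd PiE_iff)

lemma coord_mult_in_carrier: "coord_mult a x \<in> carrier primeProd"
  by (simp add: coord_mult_def carrier_primeProd prime_gt_0_nat)

lemma unit_vector_in_carrier: "unit_vector p \<in> carrier primeProd"
  using prime_gt_1_nat[of p] by (auto simp: unit_vector_def carrier_primeProd prime_gt_0_nat)

lemma coord_mult_coord_mult: "coord_mult a (coord_mult b x) = coord_mult (\<lambda>p. a p * b p) x"
  by (auto simp: coord_mult_def mod_mult_right_eq mult.assoc)

lemma primeProd_eqI:
  assumes "x \<in> carrier primeProd" "y \<in> carrier primeProd"
    and "\<And>p. prime p \<Longrightarrow> [x p = y p] (mod int p)"
  shows "x = y"
proof (rule extensionalityI)
  show "x \<in> extensional primes" "y \<in> extensional primes"
    using assms(1,2) by (auto simp: carrier_primeProd PiE_iff)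
  show "x p = y p" if "p \<in> primes" for p
    using assms that by (metis cong_def coord_mod_primeProd mem_Collect_eq)
qed

lemma coord_mult_cong:
  "(\<And>p. prime p \<Longrightarrow> [a p = b p] (mod int p)) \<Longrightarrow> coord_mult a x = coord_mult b x"
  unfolding coord_mult_def by (auto simp: cong_def intro!: restrict_ext mod_mult_cong)

text \<open>\<open>coord_mult\<close> is the multiplication of the ring \<open>\<Pi>\<^sub>p Z(p)\<close>, so the following locale
  describes its ideals containing all unit vectors; \<open>G\<close> and \<open>T\<close> are two of them.\<close>

locale coord_ideal =
  fixes H :: "(nat \<Rightarrow> int) set"
  assumes subgroup_primeProd: "subgroup H primeProd"
    and coord_mult_closed: "x \<in> H \<Longrightarrow> coord_mult a x \<in> H"
    and unit_vector_mem: "prime p \<Longrightarrow> unit_vector p \<in> H"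
begin

lemma subset_carrier: "H \<subseteq> carrier primeProd"
  using subgroup.subset[OF subgroup_primeProd] .

lemma group: "group (primeProd\<lparr>carrier := H\<rparr>)"
  by (rule subgroup.subgroup_is_group[OF subgroup_primeProd group_primeProd])

context
  fixes f assumes f: "f \<in> hom (primeProd\<lparr>carrier := H\<rparr>) (primeProd\<lparr>carrier := H\<rparr>)"
begin

lemma endo_closed: "x \<in> H \<Longrightarrow> f x \<in> H"
  using hom_in_carrier[OF f] by simp

lemma endo_mult: "x \<in> H \<Longrightarrow> y \<in> H \<Longrightarrow> f (x \<otimes>\<^bsub>primeProd\<^esub> y) = f x \<otimes>\<^bsub>primeProd\<^esub> f y"
  using hom_mult[OF f] by simp

lemma endo_coord_mult_nat: "x \<in> H \<Longrightarrow> f (coord_mult (\<lambda>_. int n) x) = coord_mult (\<lambda>_. int n) (f x)"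
  using hom_nat_pow[OF f _ group group, of x n]
  by (simp add: monoid.nat_pow_consistent[OF group.is_monoid[OF group_primeProd], symmetric]
      nat_pow_primeProd)

lemma endo_coord_vanishes:
  assumes x: "x \<in> H" and p: "prime p" and x0: "x p = 0"
  shows "f x p = 0"
proof -
  \<comment> \<open>\<open>x = p z\<close>, where \<open>z\<close> multiplies each coordinate \<open>q \<noteq> p\<close> by an inverse of \<open>p\<close> modulo \<open>q\<close>\<close>
  define z where "z = coord_mult (\<lambda>q. int p ^ (q - 2)) x"
  have z: "z \<in> H"
    unfolding z_def using x by (rule coord_mult_closed)
  have "coord_mult (\<lambda>_. int p) z = coord_mult (\<lambda>q. int p ^ (q - 1)) x"
    unfolding z_def coord_mult_coord_mult
    by (rule coord_mult_cong) (simp add: mult_power_diff_two prime_ge_2_nat)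
  also have "\<dots> = x"
  proof (rule primeProd_eqI[OF coord_mult_in_carrier])
    show "x \<in> carrier primeProd"
      using x subset_carrier by blast
    fix q :: nat assume q: "prime q"
    show "[coord_mult (\<lambda>q. int p ^ (q - 1)) x q = x q] (mod int q)"
    proof (cases "q = p")
      case True
      then show ?thesis using x0 q by (simp add: coord_mult_def)
    next
      case False
      then have "\<not> int q dvd int p"
        using p q primes_dvd_imp_eq by auto
      then have "[int p ^ (q - 1) * x q = 1 * x q] (mod int q)"
        by (intro cong_mult cong_refl fermat_theorem_int q)
      then show ?thesis
        using q by (simp add: coord_mult_def cong_def)
    qed
  qed
  finally have "f x = coord_mult (\<lambda>_. int p) (f z)"
    using endo_coord_mult_nat[OF z] by metis
  then show ?thesis
    using p by (simp add: coord_mult_def)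
qed

lemma endo_coord_eq:
  assumes x: "x \<in> H" and y: "y \<in> H" and p: "prime p" and xy: "x p = y p"
  shows "f x p = f y p"
proof -
  \<comment> \<open>\<open>y\<close> raised to the power \<open>p - 1\<close> acts as the inverse of \<open>y\<close> in the coordinate \<open>p\<close>\<close>
  have coord_p: "(u \<otimes>\<^bsub>primeProd\<^esub> coord_mult (\<lambda>_. int (p - 1)) v) p = (u p - v p) mod int p"
    for u v
  proof -
    have "(u \<otimes>\<^bsub>primeProd\<^esub> coord_mult (\<lambda>_. int (p - 1)) v) p = (u p + int (p - 1) * v p) mod int p"
      using p by (simp add: mult_primeProd coord_mult_def mod_add_right_eq)
    then show ?thesis
      by (simp only: mod_add_pred_mult[OF prime_gt_0_nat[OF p]])
  qed
  define w where "w = x \<otimes>\<^bsub>primeProd\<^esub> coord_mult (\<lambda>_. int (p - 1)) y"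
  have w: "w \<in> H"
    unfolding w_def using x y coord_mult_closed subgroup.m_closed[OF subgroup_primeProd] by simp
  have "w p = 0"
    using coord_p[of x y] xy by (simp add: w_def)
  then have "f w p = 0"
    by (rule endo_coord_vanishes[OF w p])
  moreover have "f w = f x \<otimes>\<^bsub>primeProd\<^esub> coord_mult (\<lambda>_. int (p - 1)) (f y)"
    unfolding w_def using x y coord_mult_closed by (simp add: endo_mult endo_coord_mult_nat)
  ultimately have "(f x p - f y p) mod int p = 0"
    using coord_p by simp
  then have "[f x p = f y p] (mod int p)"
    by (simp add: cong_iff_dvd_diff dvd_eq_mod_eq_0)
  then show ?thesis
    using coord_mod_primeProd endo_closed x y p subset_carrier by (metis cong_def subsetD)
qed

lemma endo_eq_coord_mult:
  assumes x: "x \<in> H"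
  shows "f x = coord_mult (\<lambda>p. f (unit_vector p) p) x"
proof (rule primeProd_eqI[OF _ coord_mult_in_carrier])
  show "f x \<in> carrier primeProd"
    using endo_closed x subset_carrier by blast
  fix p :: nat assume p: "prime p"
  define u where "u = coord_mult (\<lambda>_. int (nat (x p))) (unit_vector p)"
  have u: "u \<in> H"
    unfolding u_def by (rule coord_mult_closed[OF unit_vector_mem[OF p]])
  have "u p = x p"
    using p coord_mod_primeProd[of x p] x subset_carrier
    by (auto simp: u_def coord_mult_def unit_vector_def carrier_primeProd PiE_iff)
  then have "f x p = f u p"
    using endo_coord_eq[OF x u p] by simp
  also have "f u = coord_mult (\<lambda>_. int (nat (x p))) (f (unit_vector p))"
    unfolding u_def by (rule endo_coord_mult_nat[OF unit_vector_mem[OF p]])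
  then have "f u p = (x p * f (unit_vector p) p) mod int p"
    using p x subset_carrier by (auto simp: coord_mult_def carrier_primeProd PiE_iff)
  finally show "[f x p = coord_mult (\<lambda>p. f (unit_vector p) p) x p] (mod int p)"
    using p by (simp add: coord_mult_def mult.commute)
qed

end

theorem strongly_coHopfian: "strongly_coHopfian (primeProd\<lparr>carrier := H\<rparr>)"
  unfolding strongly_coHopfian_def
proof
  fix f assume f: "f \<in> hom (primeProd\<lparr>carrier := H\<rparr>) (primeProd\<lparr>carrier := H\<rparr>)"
  define c where "c = (\<lambda>p. f (unit_vector p) p)"
  have "f ` H \<subseteq> f ` f ` H"
  proof
    fix y assume "y \<in> f ` H"
    then obtain x where x: "x \<in> H" "y = f x"
      by blast
    \<comment> \<open>\<open>c p ^ (p - 2)\<close> inverts \<open>c p\<close> modulo \<open>p\<close> unless \<open>p\<close> divides \<open>c p\<close>\<close>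
    define x' where "x' = coord_mult (\<lambda>p. c p ^ (p - 2)) x"
    have x': "x' \<in> H"
      unfolding x'_def using x(1) by (rule coord_mult_closed)
    have "f (f x') = coord_mult (\<lambda>p. c p * (c p * c p ^ (p - 2))) x"
      using x' endo_closed[OF f x'] coord_mult_closed
      by (simp add: endo_eq_coord_mult[OF f] x'_def c_def coord_mult_coord_mult)
    also have "\<dots> = coord_mult c x"
      by (rule coord_mult_cong)
      (simp only: mult_power_diff_two[OF prime_ge_2_nat] mult_power_pred[OF prime_gt_0_nat]
        fermat_little_int)
    also have "\<dots> = y"
      using x by (simp add: endo_eq_coord_mult[OF f] c_def)
    finally show "y \<in> f ` f ` H"
      using x' by blast
  qed
  moreover have "f ` f ` H \<subseteq> f ` H"
    using endo_closed[OF f] by blast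
  ultimately show "\<exists>n. (f ^^ n) ` carrier (primeProd\<lparr>carrier := H\<rparr>)
                      = (f ^^ Suc n) ` carrier (primeProd\<lparr>carrier := H\<rparr>)"
    by (intro exI[of _ 1]) (simp add: image_comp)
qed

end

lemma strongly_coHopfian_primeProd: "strongly_coHopfian primeProd"
proof -
  interpret coord_ideal "carrier primeProd"
    by (rule coord_ideal.intro)
      (simp_all add: group.subgroup_self[OF group_primeProd] coord_mult_in_carrier unit_vector_in_carrier)
  show ?thesis
    using strongly_coHopfian by simp
qed

lemma carrier_primeSum: "carrier primeSum = {x \<in> carrier primeProd. finite {p. prime p \<and> x p \<noteq> 0}}"
  by (simp add: primeSum_def primeProd_def carrier_sum_group)

lemma subgroup_primeSum: "subgroup (carrier primeSum) primeProd"
  using subgroup_sum_group[of primes integer_mod_group]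
  by (simp add: primeSum_def primeProd_def carrier_sum_group)

lemma strongly_coHopfian_primeSum: "strongly_coHopfian primeSum"
proof -
  have support_mono: "x \<in> carrier primeSum"
    if "y \<in> carrier primeSum" "x \<in> carrier primeProd" "\<And>p. prime p \<Longrightarrow> y p = 0 \<Longrightarrow> x p = 0"
    for x y
  proof -
    have "{p. prime p \<and> x p \<noteq> 0} \<subseteq> {p. prime p \<and> y p \<noteq> 0}"
      using that(3) by blast
    then show ?thesis
      using that(1,2) finite_subset by (auto simp: carrier_primeSum)
  qed
  interpret coord_ideal "carrier primeSum"
  proof (rule coord_ideal.intro)
    show "subgroup (carrier primeSum) primeProd"
      by (rule subgroup_primeSum)
    show "coord_mult a x \<in> carrier primeSum" if "x \<in> carrier primeSum" for a x
      by (rule support_mono[OF that coord_mult_in_carrier]) (simp add: coord_mult_def)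
    show "unit_vector p \<in> carrier primeSum" if "prime p" for p
    proof -
      have "{q. prime q \<and> unit_vector p q \<noteq> 0} \<subseteq> {p}"
        by (auto simp: unit_vector_def)
      then show ?thesis
        using unit_vector_in_carrier finite_subset by (auto simp: carrier_primeSum)
    qed
  qed
  have "primeSum = primeProd\<lparr>carrier := carrier primeSum\<rparr>"
    by (simp add: primeSum_def primeProd_def sum_group_def subgroup_generated_def)
  then show ?thesis
    using strongly_coHopfian by simp
qed

section \<open>The quotient by the torsion subgroup as a rational vector space\<close>

text \<open>Integer sequences up to congruence modulo \<open>p\<close> at almost all primes \<open>p\<close>: a model of \<open>G / T\<close>.\<close>

definition almost_cong :: "(nat \<Rightarrow> int) \<Rightarrow> (nat \<Rightarrow> int) \<Rightarrow> bool" where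
  "almost_cong x y \<longleftrightarrow> (\<forall>\<^sub>F p in cofinite. prime p \<longrightarrow> [x p = y p] (mod int p))"

lemma almost_cong_refl [simp]: "almost_cong x x"
  by (simp add: almost_cong_def)

lemma equivp_almost_cong: "equivp almost_cong"
proof (rule equivpI)
  show "reflp almost_cong"
    by (simp add: reflp_def)
  show "symp almost_cong"
    by (simp add: symp_def almost_cong_def cong_sym_eq)
  show "transp almost_cong"
    unfolding transp_def almost_cong_def
    by (auto elim: eventually_elim2 intro: cong_trans)
qed

lemma almost_cong_sym: "almost_cong x y \<Longrightarrow> almost_cong y x"
  using equivp_symp[OF equivp_almost_cong] .

quotient_type residue_germ = "nat \<Rightarrow> int" / almost_cong
  by (rule equivp_almost_cong)

instantiation residue_germ :: ab_group_add
begin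

lift_definition zero_residue_germ :: residue_germ is "\<lambda>p. 0" .

lift_definition plus_residue_germ :: "residue_germ \<Rightarrow> residue_germ \<Rightarrow> residue_germ"
  is "\<lambda>x y p. x p + y p"
  unfolding almost_cong_def by (auto elim: eventually_elim2 intro: cong_add)

lift_definition uminus_residue_germ :: "residue_germ \<Rightarrow> residue_germ" is "\<lambda>x p. - x p"
  unfolding almost_cong_def by (auto elim: eventually_mono simp: cong_minus_minus_iff)

lift_definition minus_residue_germ :: "residue_germ \<Rightarrow> residue_germ \<Rightarrow> residue_germ"
  is "\<lambda>x y p. x p - y p"
  unfolding almost_cong_def by (auto elim: eventually_elim2 intro: cong_diff)

instance
  by standard (transfer; simp add: algebra_simps)+

end

text \<open>For \<open>r = a / b\<close> in lowest terms and \<open>p\<close> not dividing \<open>b\<close>, this is \<open>a b\<^sup>-\<^sup>1\<close> modulo \<open>p\<close>,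
  by Fermat; the values at the finitely many primes dividing \<open>b\<close> are junk.\<close>

definition rat_residue :: "rat \<Rightarrow> nat \<Rightarrow> int" where
  "rat_residue r p = fst (quotient_of r) * snd (quotient_of r) ^ (p - 2)"

lemma rat_residue_cong:
  assumes p: "prime p" and b: "\<not> int p dvd b" and r: "r = of_int a / of_int b"
  shows "[b * rat_residue r p = a] (mod int p)"
proof -
  obtain n d where q: "quotient_of r = (n, d)"
    by (cases "quotient_of r")
  have d: "d > 0" and "coprime d n"
    using quotient_of_denom_pos[OF q] quotient_of_coprime[OF q] by (simp_all add: coprime_commute)
  have "b \<noteq> 0"
    using b by auto
  then have "(of_int (a * d) :: rat) = of_int (n * b)"
    using r quotient_of_div[OF q] d by (simp add: frac_eq_eq)
  then have ad: "a * d = n * b"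
    by (simp only: of_int_eq_iff)
  then have "d dvd n * b"
    by (metis dvd_triv_right)
  then have "d dvd b"
    using coprime_dvd_mult_right_iff[OF \<open>coprime d n\<close>] by simp
  then have nd: "\<not> int p dvd d"
    using b dvd_trans by blast
  have inv: "[d * d ^ (p - 2) = 1] (mod int p)"
    using fermat_theorem_int[OF p nd] by (simp add: mult_power_diff_two prime_ge_2_nat[OF p])
  have "d * (b * rat_residue r p) = b * n * (d * d ^ (p - 2))"
    by (simp add: rat_residue_def q algebra_simps)
  also have "[\<dots> = b * n * 1] (mod int p)"
    by (rule cong_mult[OF cong_refl inv])
  also have "b * n * 1 = d * a"
    using ad by (simp add: algebra_simps)
  finally show ?thesis
    using cong_mult_lcancel[OF prime_not_dvd_imp_coprime[OF p nd]] by simp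
qed

lemma rat_residue_unique:
  assumes "prime p" and "\<not> int p dvd b" and "r = of_int a / of_int b"
    and "[b * y = a] (mod int p)"
  shows "[rat_residue r p = y] (mod int p)"
proof -
  have "[b * rat_residue r p = b * y] (mod int p)"
    using rat_residue_cong[OF assms(1-3)] assms(4) by (metis cong_sym cong_trans)
  then show ?thesis
    using cong_mult_lcancel[OF prime_not_dvd_imp_coprime[OF assms(1,2)]] by simp
qed

lemma rat_residue_add:
  "\<forall>\<^sub>F p in cofinite. prime p \<longrightarrow> [rat_residue (r + s) p = rat_residue r p + rat_residue s p] (mod int p)"
proof -
  obtain a b where b: "b \<noteq> 0" and r: "r = of_int a / of_int b"
    by (rule rat_as_fraction)
  obtain c d where d: "d \<noteq> 0" and s: "s = of_int c / of_int d"
    by (rule rat_as_fraction)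
  have rs: "r + s = of_int (a * d + c * b) / of_int (b * d)"
    using b d by (simp add: r s field_simps)
  have "b * d \<noteq> 0"
    using b d by simp
  then show ?thesis
  proof (rule eventually_mono[OF eventually_not_prime_dvd], intro impI)
    fix p assume nbd: "\<not> int p dvd b * d" and p: "prime p"
    then have "\<not> int p dvd b" "\<not> int p dvd d"
      by auto
    have "[b * rat_residue r p = a] (mod int p)" "[d * rat_residue s p = c] (mod int p)"
      using rat_residue_cong[OF p _ r] rat_residue_cong[OF p _ s] \<open>\<not> int p dvd b\<close> \<open>\<not> int p dvd d\<close>
      by simp_all
    then have "[d * (b * rat_residue r p) + b * (d * rat_residue s p) = d * a + b * c] (mod int p)"
      by (intro cong_add cong_mult cong_refl)
    then have "[b * d * (rat_residue r p + rat_residue s p) = a * d + c * b] (mod int p)"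
      by (simp add: algebra_simps)
    then show "[rat_residue (r + s) p = rat_residue r p + rat_residue s p] (mod int p)"
      by (rule rat_residue_unique[OF p nbd rs])
  qed
qed

lemma rat_residue_mult:
  "\<forall>\<^sub>F p in cofinite. prime p \<longrightarrow> [rat_residue (r * s) p = rat_residue r p * rat_residue s p] (mod int p)"
proof -
  obtain a b where b: "b \<noteq> 0" and r: "r = of_int a / of_int b"
    by (rule rat_as_fraction)
  obtain c d where d: "d \<noteq> 0" and s: "s = of_int c / of_int d"
    by (rule rat_as_fraction)
  have rs: "r * s = of_int (a * c) / of_int (b * d)"
    by (simp add: r s)
  have "b * d \<noteq> 0"
    using b d by simp
  then show ?thesis
  proof (rule eventually_mono[OF eventually_not_prime_dvd], intro impI)
    fix p assume nbd: "\<not> int p dvd b * d" and p: "prime p"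
    then have "\<not> int p dvd b" "\<not> int p dvd d"
      by auto
    then have "[b * rat_residue r p * (d * rat_residue s p) = a * c] (mod int p)"
      by (intro cong_mult rat_residue_cong[OF p _ r] rat_residue_cong[OF p _ s])
    then have "[b * d * (rat_residue r p * rat_residue s p) = a * c] (mod int p)"
      by (simp add: algebra_simps)
    then show "[rat_residue (r * s) p = rat_residue r p * rat_residue s p] (mod int p)"
      by (rule rat_residue_unique[OF p nbd rs])
  qed
qed

lift_definition scale_germ :: "rat \<Rightarrow> residue_germ \<Rightarrow> residue_germ"
  is "\<lambda>r x p. rat_residue r p * x p"
  unfolding almost_cong_def by (erule eventually_mono) (auto intro: cong_mult)

lemma almost_cong_mult_right:
  "\<forall>\<^sub>F p in cofinite. prime p \<longrightarrow> [u p = v p] (mod int p) \<Longrightarrow>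
    almost_cong (\<lambda>p. u p * x p) (\<lambda>p. v p * x p)"
  unfolding almost_cong_def by (erule eventually_mono) (auto intro: cong_mult)

interpretation germ: vector_space scale_germ
proof
  fix r s :: rat and x y :: residue_germ
  show "scale_germ r (x + y) = scale_germ r x + scale_germ r y"
    by transfer (simp add: algebra_simps)
  show "scale_germ (r + s) x = scale_germ r x + scale_germ s x"
    using almost_cong_mult_right[OF rat_residue_add] by transfer (simp add: distrib_right)
  show "scale_germ r (scale_germ s x) = scale_germ (r * s) x"
    using almost_cong_sym[OF almost_cong_mult_right[OF rat_residue_mult]]
    by transfer (simp add: mult.assoc)
  show "scale_germ 1 x = x"
    by transfer (simp add: rat_residue_def)
qed

lift_definition vanishes_on :: "nat set \<Rightarrow> residue_germ \<Rightarrow> bool"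
  is "\<lambda>S x. \<forall>\<^sub>F p in cofinite. p \<in> S \<longrightarrow> prime p \<longrightarrow> [x p = 0] (mod int p)"
proof -
  have *: "\<forall>\<^sub>F p in cofinite. p \<in> S \<longrightarrow> prime p \<longrightarrow> [y p = 0] (mod int p)"
    if "almost_cong x y" and "\<forall>\<^sub>F p in cofinite. p \<in> S \<longrightarrow> prime p \<longrightarrow> [x p = 0] (mod int p)"
    for S x y
    using that(1)[unfolded almost_cong_def] that(2)
    by (rule eventually_elim2) (auto intro: cong_sym cong_trans)
  show "(\<forall>\<^sub>F p in cofinite. p \<in> S \<longrightarrow> prime p \<longrightarrow> [x p = 0] (mod int p)) =
        (\<forall>\<^sub>F p in cofinite. p \<in> S \<longrightarrow> prime p \<longrightarrow> [y p = 0] (mod int p))"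
    if "almost_cong x y" for S x y
    using *[OF that] *[OF almost_cong_sym[OF that]] by blast
qed

lemma subspace_vanishes_on: "germ.subspace {x. vanishes_on S x}"
  unfolding germ.subspace_def
proof (intro conjI ballI allI)
  show "0 \<in> {x. vanishes_on S x}"
    by simp (transfer, simp)
  show "x + y \<in> {x. vanishes_on S x}" if "x \<in> {x. vanishes_on S x}" "y \<in> {x. vanishes_on S x}" for x y
    using that
    by simp (transfer, erule (1) eventually_elim2, auto simp: cong_0_iff)
  show "scale_germ r x \<in> {x. vanishes_on S x}" if "x \<in> {x. vanishes_on S x}" for r x
    using that
    by simp (transfer, erule eventually_mono, auto simp: cong_0_iff)
qed

definition prime_class :: "nat \<Rightarrow> nat set" where
  "prime_class k = range (\<lambda>m. enumerate primes (prod_encode (k, m)))"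

lemma prime_class_prime: "p \<in> prime_class k \<Longrightarrow> prime p"
  using enumerate_in_set[OF primes_infinite] by (auto simp: prime_class_def)

lemma prime_class_disjoint: "p \<in> prime_class k \<Longrightarrow> p \<in> prime_class j \<Longrightarrow> k = j"
  using inj_enumerate[OF primes_infinite] by (auto simp: prime_class_def inj_eq)

lemma infinite_prime_class: "infinite (prime_class k)"
  unfolding prime_class_def
  by (rule range_inj_infinite) (simp add: inj_def inj_eq[OF inj_enumerate[OF primes_infinite]])

definition class_germ :: "nat \<Rightarrow> residue_germ" where
  "class_germ k = abs_residue_germ (\<lambda>p. of_bool (p \<in> prime_class k))"

lemma vanishes_on_class_germ_iff: "vanishes_on (prime_class j) (class_germ k) \<longleftrightarrow> k \<noteq> j"
proof
  assume "vanishes_on (prime_class j) (class_germ k)"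
  then have vanish: "\<forall>\<^sub>F p in cofinite. p \<in> prime_class j \<longrightarrow> prime p \<longrightarrow>
                       [of_bool (p \<in> prime_class k) = 0] (mod int p)"
    by (simp add: class_germ_def vanishes_on.abs_eq)
  show "k \<noteq> j"
  proof
    assume "k = j"
    have "\<forall>\<^sub>F p in cofinite. p \<notin> prime_class j"
      using vanish
      by (rule eventually_mono) (auto simp: \<open>k = j\<close> cong_0_iff dest: prime_class_prime)
    then show False
      using infinite_prime_class by (simp add: eventually_cofinite)
  qed
next
  assume "k \<noteq> j"
  then show "vanishes_on (prime_class j) (class_germ k)"
    by (simp add: class_germ_def vanishes_on.abs_eq)
      (rule always_eventually, use prime_class_disjoint in blast)
qed

lemma inj_class_germ: "inj class_germ"
  by (rule injI) (metis vanishes_on_class_germ_iff)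

lemma independent_class_germ: "germ.independent (range class_germ)"
proof
  assume "germ.dependent (range class_germ)"
  then obtain j where "class_germ j \<in> germ.span (range class_germ - {class_germ j})"
    unfolding germ.dependent_def by blast
  moreover have "range class_germ - {class_germ j} \<subseteq> {x. vanishes_on (prime_class j) x}"
    using vanishes_on_class_germ_iff by auto
  ultimately have "vanishes_on (prime_class j) (class_germ j)"
    using germ.span_minimal[OF _ subspace_vanishes_on] by blast
  then show False
    by (simp add: vanishes_on_class_germ_iff)
qed

lemma abs_residue_germ_mult_primeProd:
  "abs_residue_germ (x \<otimes>\<^bsub>primeProd\<^esub> y) = abs_residue_germ x + abs_residue_germ y"
  by (simp add: plus_residue_germ.abs_eq residue_germ.abs_eq_iff mult_primeProd almost_cong_def cong_def)

lemma group_hom_abs_residue_germ: "group_hom primeProd additive_group abs_residue_germ"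
proof -
  have "abs_residue_germ \<in> hom primeProd additive_group"
    by (rule homI) (simp_all add: additive_group_def abs_residue_germ_mult_primeProd)
  then show ?thesis
    by (simp add: group_hom_def group_hom_axioms_def group_primeProd group_additive_group)
qed

lemma abs_residue_germ_onto: "abs_residue_germ ` carrier primeProd = carrier additive_group"
proof -
  have "q \<in> abs_residue_germ ` carrier primeProd" for q
  proof -
    obtain x where q: "q = abs_residue_germ x"
      by (metis Quotient3_abs_rep[OF Quotient3_residue_germ])
    have "almost_cong (coord_mult (\<lambda>_. 1) x) x"
      by (simp add: almost_cong_def coord_mult_def cong_def)
    then have "q = abs_residue_germ (coord_mult (\<lambda>_. 1) x)"
      using q by (simp add: residue_germ.abs_eq_iff almost_cong_sym)
    then show ?thesis
      using coord_mult_in_carrier by blast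
  qed
  then show ?thesis
    by (auto simp: additive_group_def)
qed

lemma kernel_abs_residue_germ: "kernel primeProd additive_group abs_residue_germ = carrier primeSum"
proof -
  have "abs_residue_germ x = 0 \<longleftrightarrow> finite {p. prime p \<and> x p \<noteq> 0}" if x: "x \<in> carrier primeProd" for x
  proof -
    have "[x p = 0] (mod int p) \<longleftrightarrow> x p = 0" if "prime p" for p
      using coord_mod_primeProd[OF x that] by (simp add: cong_def)
    then have "{p. \<not> (prime p \<longrightarrow> [x p = 0] (mod int p))} = {p. prime p \<and> x p \<noteq> 0}"
      by blast
    then show ?thesis
      by (simp add: zero_residue_germ_def residue_germ.abs_eq_iff almost_cong_def eventually_cofinite)
  qed
  then show ?thesis
    by (auto simp: kernel_def additive_group_def carrier_primeSum)
qed

lemma primeProd_Mod_primeSum_iso: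
  "primeProd Mod carrier primeSum \<cong> (additive_group :: residue_germ monoid)"
  using group_hom.FactGroup_iso[OF group_hom_abs_residue_germ abs_residue_germ_onto]
  by (simp add: kernel_abs_residue_germ)

lemma group_primeProd_Mod_primeSum: "group (primeProd Mod carrier primeSum)"
  using normal.factorgroup_is_group[OF group_hom.normal_kernel[OF group_hom_abs_residue_germ]]
  by (simp add: kernel_abs_residue_germ)

lemma not_strongly_coHopfian_primeProd_Mod_primeSum:
  "\<not> strongly_coHopfian (primeProd Mod carrier primeSum)"
proof -
  obtain L where "Vector_Spaces.linear scale_germ scale_germ L" "inj L" "\<not> surj L"
    using germ.infinite_independent_imp_inj_not_surj[OF independent_class_germ
        range_inj_infinite[OF inj_class_germ]] .
  then have "\<not> strongly_coHopfian (additive_group :: residue_germ monoid)"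
    by (intro not_strongly_coHopfian_additive_group[of L]) (simp_all add: Vector_Spaces.linear_iff)
  then show ?thesis
    using strongly_coHopfian_iso[OF group_primeProd_Mod_primeSum primeProd_Mod_primeSum_iso] by blast
qed

theorem mainTheorem14:
  shows "strongly_coHopfian primeProd \<and> strongly_coHopfian primeSum
         \<and> \<not> strongly_coHopfian (primeProd Mod (carrier primeSum))"
  using strongly_coHopfian_primeProd strongly_coHopfian_primeSum
    not_strongly_coHopfian_primeProd_Mod_primeSum
  by blast

end
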